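(* Let $F\in\mathbf F$ satisfy $\mathbf{H\mathcal A}$ and (I), and assume $\mathcal D(F)\neq\emptyset$. Then for every $g\in A_T(F)$ and every $Z\in\mathcal D(F)$ such that $\big(\mathbb E[Z\cdot g\mid\mathcal H_T]\big)^-\in L^1(\mathbb R;\mathcal F)$, one has $\mathbb E[Z\cdot g]\le0$.
   Context: Fix $T\in\mathbb N$, $\mathbb T=\{0,\dots,T\}$, $d\ge1$, a complete probability space $(\Omega,\mathcal F,\mathbb P)$ and a filtration $\mathbb H=(\mathcal H_t)_{t\in\mathbb T}$ with $\mathcal H_T\subset\mathcal F$ (no other relation between $\mathbb H$ and the other processes is assumed). Equalities and inequalities between random variables are understood $\mathbb P$-a.s. $\mathbb M^d$ denotes the real $d\times d$ matrices, $\mathbb M^d_+$ those with nonnegative entries, and $e_{ij}$ the matrix whose $(i,j)$ entry is $1$ and all other entries $0$. For $E\subset\mathbb M^d$ (or $E\subset\mathbb R^d$) and a $\sigma$-algebra $\mathcal G\subset\mathcal F$, $L^0(E;\mathcal G)$ is the set of $E$-valued $\mathcal G$-measurable random variables; $L^1(\mathbb R^d;\mathcal F)$ and $L^\infty(\mathbb R^d;\mathcal F)$ are the integrable, resp. bounded, elements of $L^0(\mathbb R^d;\mathcal F)$. A closed convex cone $\mathcal A\subset\mathbb M^d$ is fixed; $\mathbb L^0(\mathcal A;\mathbb H)$ denotes the set of $\mathcal A$-valued $\mathbb H$-adapted processes $(\eta_t)_{t\in\mathbb T}$. $\mathbb F$ is the set of continuous maps $f:\mathbb M^d\to\mathbb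 R^d$ such that (HF1) $f(\lambda a)=\lambda f(a)$ for all $\lambda\ge0$, $a\in\mathbb M^d$; (HF2) $f(\lambda a+\beta a')-(\lambda f(a)+\beta f(a'))\in\mathbb R^d_+$ for all $\lambda,\beta\ge0$, $a,a'\in\mathcal A$. $\mathbf F$ is the set of sequences $F=(F_t)_{t\in\mathbb T}$ of $\mathcal F$-measurable random maps $F_t:\Omega\times\mathbb M^d\to\mathbb R^d$ with $F_t(\omega,\cdot)\in\mathbb F$ for a.e. $\omega$ (no adaptedness to $\mathbb H$ is assumed); for a random matrix $\eta$, $F_t(\eta)(\omega)=F_t(\omega,\eta(\omega))$. $N_t(F)=\{F_t(\eta):\eta\in L^0(\mathcal A;\mathcal H_t)\}$, $N^0_t(F)=N_t(F)\cap(-N_t(F))$. For a process $\xi=(\xi_t)_{t\in\mathbb T}$, "$\xi\in N(F)$" means $\xi_t\in N_t(F)$ for all $t$. $V_t(\xi)=\sum_{s=0}^t\xi_s$ and $A_t(F)=\{V_t(\xi)-r:\ \xi\in N(F),\ r\in L^0(\mathbb R^d_+;\mathcal F)\}$. Condition $\mathbf{H\mathcal A}$: for every $t\in\mathbb T$: (1) $F_t(\delta e_{ij})=0$ whenever $\delta e_{ij}\notin\mathcal A$, $\delta\in\{-1,1\}$, $i,j\le d$; (2) for every $\eta\in L^0(\mathbb M^d;\mathcal F)$, $F_t(\eta)=\sum_{i,j\le d}(\eta^{ij})^+F_t(e_{ij})+(\eta^{ij})^-F_t(-e_{ij})$. Condition (I): $F_t(e_{ij}),F_t(-e_{ij})\in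 L^1(\mathbb R^d;\mathcal F)$ for all $i,j\le d$, $t\in\mathbb T$. For $Z\in L^\infty(\mathbb R^d;\mathcal F)$ and $\eta\in L^0(\mathcal A;\mathcal H_t)$, $\bar F_t(\eta;Z):=\mathbb E[Z\cdot F_t(\eta)\mid\mathcal H_t]$, which under $\mathbf{H\mathcal A}$ and (I) is understood as $\sum_{i,j}(\eta^{ij})^+\mathbb E[Z\cdot F_t(e_{ij})\mid\mathcal H_t]+(\eta^{ij})^-\mathbb E[Z\cdot F_t(-e_{ij})\mid\mathcal H_t]$ ($\cdot$ is the scalar product of $\mathbb R^d$). $\mathcal D(F)$ is the set of $Z\in L^\infty(\mathbb R^d;\mathcal F)$ with $Z^i>0$ a.s. for all $i\le d$ such that for all $\eta\in\mathbb L^0(\mathcal A;\mathbb H)$ and $t\in\mathbb T$: (D1) $\bar F_t(\eta_t;Z)\le0$; (D2) $F_t(\eta_t)\mathbf 1_{\{\bar F_t(\eta_t;Z)=0\}}\in N^0_t(F)$. *)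

theory Defs
  imports "HOL-Probability.Probability"
begin

type_synonym 'd mat = "real ^ 'd ^ 'd"

definition eij :: "'d::finite \<Rightarrow> 'd \<Rightarrow> 'd mat" where
  "eij i j = (\<chi> k l. if k = i \<and> l = j then 1 else 0)"

definition ppart :: "real \<Rightarrow> real" where "ppart x = max x 0"
definition npart :: "real \<Rightarrow> real" where "npart x = max (- x) 0"

definition Fclass :: "'d::finite mat set \<Rightarrow> ('d mat \<Rightarrow> real ^ 'd) set" where
  "Fclass A = {f. continuous_on UNIV f
      \<and> (\<forall>(l::real) a. l \<ge> 0 \<longrightarrow> f (l *\<^sub>R a) = l *\<^sub>R f a)
      \<and> (\<forall>(l::real) b a a'. l \<ge> 0 \<longrightarrow> b \<ge> 0 \<longrightarrow> a \<in> A \<longrightarrow> a' \<in> A \<longrightarrow>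
            (\<forall>k. (f (l *\<^sub>R a + b *\<^sub>R a') - (l *\<^sub>R f a + b *\<^sub>R f a')) $ k \<ge> 0))}"

definition in_bfF :: "'w measure \<Rightarrow> nat \<Rightarrow> 'd::finite mat set \<Rightarrow>
    (nat \<Rightarrow> 'w \<Rightarrow> 'd mat \<Rightarrow> real ^ 'd) \<Rightarrow> bool" where
  "in_bfF M T A F \<longleftrightarrow> (\<forall>t\<le>T.
      (\<lambda>(w, a). F t w a) \<in> borel_measurable (M \<Otimes>\<^sub>M borel)
      \<and> (AE w in M. F t w \<in> Fclass A))"

definition condHA :: "'w measure \<Rightarrow> nat \<Rightarrow> 'd::finite mat set \<Rightarrow>
    (nat \<Rightarrow> 'w \<Rightarrow> 'd mat \<Rightarrow> real ^ 'd) \<Rightarrow> bool" where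
  "condHA M T A F \<longleftrightarrow> (\<forall>t\<le>T.
      (\<forall>(\<delta>::real)\<in>{-1, 1}. \<forall>i j. \<delta> *\<^sub>R eij i j \<notin> A \<longrightarrow>
          (AE w in M. F t w (\<delta> *\<^sub>R eij i j) = 0))
      \<and> (\<forall>\<eta> \<in> borel_measurable M. AE w in M.
          F t w (\<eta> w) = (\<Sum>i\<in>UNIV. \<Sum>j\<in>UNIV.
              ppart (\<eta> w $ i $ j) *\<^sub>R F t w (eij i j)
            + npart (\<eta> w $ i $ j) *\<^sub>R F t w (- eij i j))))"

definition condI :: "'w measure \<Rightarrow> nat \<Rightarrow>
    (nat \<Rightarrow> 'w \<Rightarrow> 'd::finite mat \<Rightarrow> real ^ 'd) \<Rightarrow> bool" where
  "condI M T F \<longleftrightarrow> (\<forall>t\<le>T. \<forall>i j.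
      integrable M (\<lambda>w. F t w (eij i j)) \<and> integrable M (\<lambda>w. F t w (- eij i j)))"

definition L0A :: "'w measure \<Rightarrow> 'd::finite mat set \<Rightarrow> ('w \<Rightarrow> 'd mat) set" where
  "L0A N A = {\<eta>. \<eta> \<in> borel_measurable N \<and> (\<forall>w\<in>space N. \<eta> w \<in> A)}"

definition Nt :: "'w measure \<Rightarrow> (nat \<Rightarrow> 'w measure) \<Rightarrow> 'd::finite mat set \<Rightarrow>
    (nat \<Rightarrow> 'w \<Rightarrow> 'd mat \<Rightarrow> real ^ 'd) \<Rightarrow> nat \<Rightarrow> ('w \<Rightarrow> real ^ 'd) set" where
  "Nt M H A F t = {\<xi>. \<xi> \<in> borel_measurable M \<and>
      (\<exists>\<eta> \<in> L0A (H t) A. AE w in M. \<xi> w = F t w (\<eta> w))}"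

definition N0t :: "'w measure \<Rightarrow> (nat \<Rightarrow> 'w measure) \<Rightarrow> 'd::finite mat set \<Rightarrow>
    (nat \<Rightarrow> 'w \<Rightarrow> 'd mat \<Rightarrow> real ^ 'd) \<Rightarrow> nat \<Rightarrow> ('w \<Rightarrow> real ^ 'd) set" where
  "N0t M H A F t = {\<xi>. \<xi> \<in> Nt M H A F t \<and> (\<lambda>w. - \<xi> w) \<in> Nt M H A F t}"

definition At :: "'w measure \<Rightarrow> (nat \<Rightarrow> 'w measure) \<Rightarrow> 'd::finite mat set \<Rightarrow>
    (nat \<Rightarrow> 'w \<Rightarrow> 'd mat \<Rightarrow> real ^ 'd) \<Rightarrow> nat \<Rightarrow> nat \<Rightarrow> ('w \<Rightarrow> real ^ 'd) set" where
  "At M H A F T t = {g. g \<in> borel_measurable M \<and>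
      (\<exists>\<xi> r. (\<forall>s\<le>T. \<xi> s \<in> Nt M H A F s)
         \<and> r \<in> borel_measurable M \<and> (\<forall>w\<in>space M. \<forall>k. r w $ k \<ge> 0)
         \<and> (AE w in M. g w = (\<Sum>s\<le>t. \<xi> s w) - r w))}"

text \<open>\<open>\<bar>F\<close>_t(eta; Z), defined through the representation under H-A and (I).\<close>
definition Fbar :: "'w measure \<Rightarrow> (nat \<Rightarrow> 'w measure) \<Rightarrow>
    (nat \<Rightarrow> 'w \<Rightarrow> 'd::finite mat \<Rightarrow> real ^ 'd) \<Rightarrow> nat \<Rightarrow> ('w \<Rightarrow> 'd mat) \<Rightarrow>
    ('w \<Rightarrow> real ^ 'd) \<Rightarrow> 'w \<Rightarrow> real" where
  "Fbar M H F t \<eta> Z = (\<lambda>w. \<Sum>i\<in>UNIV. \<Sum>j\<in>UNIV.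
      ppart (\<eta> w $ i $ j) * real_cond_exp M (H t) (\<lambda>v. Z v \<bullet> F t v (eij i j)) w
    + npart (\<eta> w $ i $ j) * real_cond_exp M (H t) (\<lambda>v. Z v \<bullet> F t v (- eij i j)) w)"

definition DF :: "'w measure \<Rightarrow> (nat \<Rightarrow> 'w measure) \<Rightarrow> nat \<Rightarrow> 'd::finite mat set \<Rightarrow>
    (nat \<Rightarrow> 'w \<Rightarrow> 'd mat \<Rightarrow> real ^ 'd) \<Rightarrow> ('w \<Rightarrow> real ^ 'd) set" where
  "DF M H T A F = {Z. Z \<in> borel_measurable M \<and> (\<exists>C. AE w in M. norm (Z w) \<le> C)
      \<and> (AE w in M. \<forall>i. Z w $ i > 0)
      \<and> (\<forall>\<eta>. (\<forall>t\<le>T. \<eta> t \<in> L0A (H t) A) \<longrightarrow> (\<forall>t\<le>T.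
            (AE w in M. Fbar M H F t (\<eta> t) Z w \<le> 0)
          \<and> (\<lambda>w. if Fbar M H F t (\<eta> t) Z w = 0 then F t w (\<eta> t w) else 0)
                \<in> N0t M H A F t))}"

definition gcond_exp :: "'w measure \<Rightarrow> 'w measure \<Rightarrow> ('w \<Rightarrow> real) \<Rightarrow> 'w \<Rightarrow> ereal" where
  "gcond_exp M N X = (\<lambda>w. enn2ereal (nn_cond_exp M N (\<lambda>v. ennreal (X v)) w)
                          - enn2ereal (nn_cond_exp M N (\<lambda>v. ennreal (- X v)) w))"

end

theory Submission
  imports Defs
begin

(* Write a_(t,k) for the positive and negative parts of the entries of eta_t, which are
   H_t-measurable and nonnegative, and U_(t,k) = Z . F_t(+-e_ij), which is integrable. Condition
   H-A gives Z . g <= S_T with S_t = sum_(s<=t) sum_k a_(s,k) U_(s,k), and (D1) says that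
   sum_k a_(t,k) E[U_(t,k) | H_t] <= 0. Let C_t = sum_(s<=t) sum_k a_(s,k) E[U_(s,k) | H_t]; on the
   H_t-sets where the weights are bounded, C_t is the conditional expectation of S_t, so that
   E[Z . g | H_T] <= C_T. By induction on t, E[C_t^+] <= E[C_t^-]: by (D1) at time t + 1,
   C_(t+1) <= D = sum_(s<=t) sum_k a_(s,k) E[U_(s,k) | H_(t+1)], and D has the same integrals as
   C_t over those H_t-sets. This transfers the inequality from C_t to D: if E[D^-] is finite, then
   so is E[C_t^-], hence C_t and then D are integrable, with E[D] = E[C_t] <= 0. *)

definition gen_mean_nonpos :: "'a measure \<Rightarrow> ('a \<Rightarrow> real) \<Rightarrow> bool" where
  "gen_mean_nonpos M Y \<longleftrightarrow> (\<integral>\<^sup>+w. ennreal (Y w) \<partial>M) \<le> (\<integral>\<^sup>+w. ennreal (- Y w) \<partial>M)"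

lemma gen_mean_nonpos_mono:
  assumes "AE w in M. Y w \<le> Y' w" and "gen_mean_nonpos M Y'"
  shows "gen_mean_nonpos M Y"
proof -
  have "(\<integral>\<^sup>+w. ennreal (Y w) \<partial>M) \<le> (\<integral>\<^sup>+w. ennreal (Y' w) \<partial>M)"
    using assms(1) by (intro nn_integral_mono_AE) (auto elim!: eventually_mono intro: ennreal_leI)
  also have "\<dots> \<le> (\<integral>\<^sup>+w. ennreal (- Y' w) \<partial>M)"
    using assms(2) unfolding gen_mean_nonpos_def .
  also have "\<dots> \<le> (\<integral>\<^sup>+w. ennreal (- Y w) \<partial>M)"
    using assms(1) by (intro nn_integral_mono_AE) (auto elim!: eventually_mono intro: ennreal_leI)
  finally show ?thesis unfolding gen_mean_nonpos_def .
qed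

lemma gen_mean_nonpos_iff_integral_nonpos:
  assumes "integrable M Y"
  shows "gen_mean_nonpos M Y \<longleftrightarrow> integral\<^sup>L M Y \<le> 0"
  using assms by (elim integrableE) (auto simp: gen_mean_nonpos_def)

lemma ennreal_integral_le_nn_integral:
  assumes "integrable M f"
  shows "ennreal (integral\<^sup>L M f) \<le> (\<integral>\<^sup>+w. ennreal (f w) \<partial>M)"
  using assms by (elim integrableE) (auto intro: ennreal_leI)

lemma nn_integral_le_integral_plus_neg:
  assumes "integrable M f"
  shows "(\<integral>\<^sup>+w. ennreal (f w) \<partial>M) \<le> ennreal (integral\<^sup>L M f) + (\<integral>\<^sup>+w. ennreal (- f w) \<partial>M)"
  using assms
proof (elim integrableE)
  fix r q :: real assume "0 \<le> r" "0 \<le> q" and eqs: "(\<integral>\<^sup>+w. ennreal (f w) \<partial>M) = ennreal r"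
    "(\<integral>\<^sup>+w. ennreal (- f w) \<partial>M) = ennreal q" "integral\<^sup>L M f = r - q"
  show ?thesis
  proof (cases "q \<le> r")
    case True then show ?thesis unfolding eqs using \<open>0 \<le> q\<close> by (simp add: ennreal_plus[symmetric])
  next
    case False then show ?thesis unfolding eqs by (simp add: ennreal_leI add_increasing)
  qed
qed

lemma nn_integral_SUP_indicator_incseq:
  assumes [measurable]: "h \<in> borel_measurable M" "\<And>n. L n \<in> sets M"
    and "incseq L" and cover: "\<And>w. w \<in> space M \<Longrightarrow> \<exists>n. w \<in> L n"
  shows "(\<integral>\<^sup>+w. h w \<partial>M) = (SUP n. \<integral>\<^sup>+w. h w * indicator (L n) w \<partial>M)"
proof -
  have "(\<integral>\<^sup>+w. h w \<partial>M) = (\<integral>\<^sup>+w. (SUP n. h w * indicator (L n) w) \<partial>M)"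
  proof (intro nn_integral_cong antisym)
    fix w assume "w \<in> space M"
    then obtain n where "w \<in> L n" using cover by blast
    then show "h w \<le> (SUP n. h w * indicator (L n) w)"
      by (intro SUP_upper2[of n]) auto
  qed (auto intro!: SUP_least simp: indicator_def)
  also have "\<dots> = (SUP n. \<integral>\<^sup>+w. h w * indicator (L n) w \<partial>M)"
    using \<open>incseq L\<close>
    by (intro nn_integral_monotone_convergence_SUP)
       (auto simp: incseq_def le_fun_def indicator_def intro!: mult_left_mono)
  finally show ?thesis .
qed

lemma tendsto_integral_indicator_incseq:
  fixes f :: "'a \<Rightarrow> real"
  assumes "integrable M f" "\<And>n. L n \<in> sets M"
    and "incseq L" and cover: "\<And>w. w \<in> space M \<Longrightarrow> \<exists>n. w \<in> L n"
  shows "(\<lambda>n. \<integral>w. indicator (L n) w * f w \<partial>M) \<longlonglongrightarrow> integral\<^sup>L M f"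
proof (rule integral_dominated_convergence[where w="\<lambda>w. \<bar>f w\<bar>"])
  show "AE w in M. (\<lambda>n. indicator (L n) w * f w) \<longlonglongrightarrow> f w"
  proof (rule AE_I2)
    fix w assume "w \<in> space M"
    then have "indicator (\<Union>n. L n) w = (1::real)"
      using cover by auto
    moreover have "(\<lambda>n. indicator (L n) w * f w) \<longlonglongrightarrow> indicator (\<Union>n. L n) w * f w"
      by (intro tendsto_mult_right LIMSEQ_indicator_incseq \<open>incseq L\<close>)
    ultimately show "(\<lambda>n. indicator (L n) w * f w) \<longlonglongrightarrow> f w"
      by simp
  qed
qed (use assms in \<open>auto simp: indicator_def\<close>)

lemma integrable_bounded_mult:
  fixes f g :: "'a \<Rightarrow> real"
  assumes "f \<in> borel_measurable M" "\<And>w. \<bar>f w\<bar> \<le> c" "integrable M g"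
  shows "integrable M (\<lambda>w. f w * g w)"
proof (rule Bochner_Integration.integrable_bound)
  show "integrable M (\<lambda>w. c * g w)"
    using assms(3) by simp
  have "\<bar>f w * g w\<bar> \<le> \<bar>c * g w\<bar>" for w
  proof -
    have "\<bar>f w * g w\<bar> \<le> c * \<bar>g w\<bar>"
      using mult_right_mono[OF assms(2), of "\<bar>g w\<bar>"] by (simp add: abs_mult)
    also have "\<dots> \<le> \<bar>c * g w\<bar>"
      by (simp add: abs_mult mult_right_mono)
    finally show ?thesis .
  qed
  then show "AE w in M. norm (f w * g w) \<le> norm (c * g w)"
    by simp
qed (use assms in auto)

lemma integral_sum_sum:
  fixes f :: "'i \<Rightarrow> 'j \<Rightarrow> 'a \<Rightarrow> real"
  assumes "finite I" "finite J" "\<And>i j. i \<in> I \<Longrightarrow> j \<in> J \<Longrightarrow> integrable M (f i j)"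
  shows "(\<integral>w. (\<Sum>i\<in>I. \<Sum>j\<in>J. f i j w) \<partial>M) = (\<Sum>i\<in>I. \<Sum>j\<in>J. \<integral>w. f i j w \<partial>M)"
  using assms by (subst Bochner_Integration.integral_sum)
    (auto intro!: sum.cong Bochner_Integration.integral_sum Bochner_Integration.integrable_sum)

locale localized_cond_exp =
  fixes M N :: "'a measure" and L :: "nat \<Rightarrow> 'a set" and Y V :: "'a \<Rightarrow> real"
  assumes subalg: "subalgebra M N"
    and Y_measurable [measurable]: "Y \<in> borel_measurable M"
    and V_measurable [measurable]: "V \<in> borel_measurable N"
    and L_sets [measurable]: "\<And>n. L n \<in> sets N"
    and incseq_L: "incseq L"
    and L_cover: "\<And>w. w \<in> space M \<Longrightarrow> \<exists>n. w \<in> L n"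
    and localized_integrals: "\<And>n A. A \<in> sets N \<Longrightarrow> A \<subseteq> L n \<Longrightarrow>
      integrable M (\<lambda>w. indicator A w * Y w) \<and> integrable M (\<lambda>w. indicator A w * V w)
      \<and> (\<integral>w. indicator A w * Y w \<partial>M) = (\<integral>w. indicator A w * V w \<partial>M)"
begin

lemma L_sets_M [measurable]: "L n \<in> sets M"
  using subalg L_sets by (auto simp: subalgebra_def)

lemma V_measurable_M [measurable]: "V \<in> borel_measurable M"
  by (rule measurable_from_subalg[OF subalg V_measurable])

lemma nn_integral_SUP_L: "h \<in> borel_measurable M \<Longrightarrow>
    (\<integral>\<^sup>+w. h w \<partial>M) = (SUP n. \<integral>\<^sup>+w. h w * indicator (L n) w \<partial>M)"
  using incseq_L L_cover by (intro nn_integral_SUP_indicator_incseq) auto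

lemma nn_integral_neg_le: "(\<integral>\<^sup>+w. ennreal (- V w) \<partial>M) \<le> (\<integral>\<^sup>+w. ennreal (- Y w) \<partial>M)"
proof -
  have "(\<integral>\<^sup>+w. ennreal (- V w) * indicator (L n) w \<partial>M) \<le> (\<integral>\<^sup>+w. ennreal (- Y w) \<partial>M)" for n
  proof -
    define A where "A = {w \<in> space N. V w < 0} \<inter> L n"
    have A: "A \<in> sets N" "A \<subseteq> L n"
      unfolding A_def by measurable auto
    note A_integrals = localized_integrals[OF A]
    have "space N = space M"
      using subalg by (simp add: subalgebra_def)
    then have "(\<integral>\<^sup>+w. ennreal (- V w) * indicator (L n) w \<partial>M)
        = (\<integral>\<^sup>+w. ennreal (- (indicator A w * V w)) \<partial>M)"
      by (intro nn_integral_cong) (auto simp: A_def indicator_def ennreal_neg)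
    also have "\<dots> = ennreal (\<integral>w. - (indicator A w * V w) \<partial>M)"
      using A_integrals by (intro nn_integral_eq_integral) (auto simp: A_def indicator_def)
    also have "\<dots> = ennreal (\<integral>w. - (indicator A w * Y w) \<partial>M)"
      using A_integrals by simp
    also have "\<dots> \<le> (\<integral>\<^sup>+w. ennreal (- (indicator A w * Y w)) \<partial>M)"
      using A_integrals by (intro ennreal_integral_le_nn_integral) auto
    also have "\<dots> \<le> (\<integral>\<^sup>+w. ennreal (- Y w) \<partial>M)"
      by (intro nn_integral_mono) (auto simp: indicator_def)
    finally show ?thesis .
  qed
  then show ?thesis
    by (subst nn_integral_SUP_L) (auto intro: SUP_least)
qed

lemma nn_integral_pos_le:
  assumes "integrable M V"
  shows "(\<integral>\<^sup>+w. ennreal (Y w) \<partial>M) \<le> ennreal (\<integral>w. \<bar>V w\<bar> \<partial>M) + (\<integral>\<^sup>+w. ennreal (- Y w) \<partial>M)"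
proof -
  have "(\<integral>\<^sup>+w. ennreal (Y w) * indicator (L n) w \<partial>M)
      \<le> ennreal (\<integral>w. \<bar>V w\<bar> \<partial>M) + (\<integral>\<^sup>+w. ennreal (- Y w) \<partial>M)" for n
  proof -
    note Ln_integrals = localized_integrals[OF L_sets order_refl]
    have "(\<integral>w. indicator (L n) w * Y w \<partial>M) = (\<integral>w. indicator (L n) w * V w \<partial>M)"
      using Ln_integrals by blast
    also have "\<dots> \<le> (\<integral>w. \<bar>V w\<bar> \<partial>M)"
      using Ln_integrals assms by (intro integral_mono) (auto simp: indicator_def)
    finally have Ln_mean: "(\<integral>w. indicator (L n) w * Y w \<partial>M) \<le> (\<integral>w. \<bar>V w\<bar> \<partial>M)" .
    have "(\<integral>\<^sup>+w. ennreal (Y w) * indicator (L n) w \<partial>M)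
        = (\<integral>\<^sup>+w. ennreal (indicator (L n) w * Y w) \<partial>M)"
      by (intro nn_integral_cong) (auto simp: indicator_def)
    also have "\<dots> \<le> ennreal (\<integral>w. indicator (L n) w * Y w \<partial>M)
        + (\<integral>\<^sup>+w. ennreal (- (indicator (L n) w * Y w)) \<partial>M)"
      using Ln_integrals by (intro nn_integral_le_integral_plus_neg) auto
    also have "\<dots> \<le> ennreal (\<integral>w. \<bar>V w\<bar> \<partial>M) + (\<integral>\<^sup>+w. ennreal (- Y w) \<partial>M)"
      using Ln_mean by (intro add_mono ennreal_leI) (auto intro!: nn_integral_mono simp: indicator_def)
    finally show ?thesis .
  qed
  then show ?thesis
    by (subst nn_integral_SUP_L) (auto intro: SUP_least)
qed

lemma integral_eq:
  assumes "integrable M Y" "integrable M V"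
  shows "integral\<^sup>L M Y = integral\<^sup>L M V"
proof -
  have "(\<integral>w. indicator (L n) w * Y w \<partial>M) = (\<integral>w. indicator (L n) w * V w \<partial>M)" for n
    using localized_integrals[of "L n" n] by simp
  then have "(\<lambda>n. \<integral>w. indicator (L n) w * V w \<partial>M) \<longlonglongrightarrow> integral\<^sup>L M Y"
    using tendsto_integral_indicator_incseq[OF assms(1) L_sets_M incseq_L L_cover] by simp
  then show ?thesis
    using tendsto_integral_indicator_incseq[OF assms(2) L_sets_M incseq_L L_cover]
    by (rule LIMSEQ_unique)
qed

theorem gen_mean_nonpos_transfer:
  assumes "gen_mean_nonpos M V"
  shows "gen_mean_nonpos M Y"
proof (cases "(\<integral>\<^sup>+w. ennreal (- Y w) \<partial>M) = \<infinity>")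
  case True
  then show ?thesis
    unfolding gen_mean_nonpos_def by simp
next
  case False
  with assms nn_integral_neg_le have V_int: "integrable M V"
    unfolding gen_mean_nonpos_def real_integrable_def by (auto simp: top_unique)
  with False nn_integral_pos_le have Y_int: "integrable M Y"
    unfolding real_integrable_def by (auto simp: top_unique)
  from assms show ?thesis
    using V_int Y_int integral_eq by (simp add: gen_mean_nonpos_iff_integral_nonpos)
qed

end

context sigma_finite_subalgebra
begin

lemma nn_cond_exp_finite_AE:
  assumes [measurable]: "g \<in> borel_measurable M" and "(\<integral>\<^sup>+w. g w \<partial>M) \<noteq> \<infinity>"
  shows "AE w in M. nn_cond_exp M F g w \<noteq> \<infinity>"
proof (rule nn_integral_PInf_AE)
  have "(\<integral>\<^sup>+w. nn_cond_exp M F g w \<partial>M) = (\<integral>\<^sup>+w. 1 * g w \<partial>M)"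
    using nn_cond_exp_intg[of "\<lambda>_. 1" g] by simp
  then show "(\<integral>\<^sup>+w. nn_cond_exp M F g w \<partial>M) \<noteq> \<infinity>"
    using assms(2) by simp
qed simp

lemma gcond_exp_eq_real_cond_exp:
  assumes "integrable M f"
  shows "AE w in M. gcond_exp M F f w = ereal (real_cond_exp M F f w)"
proof -
  have "AE w in M. nn_cond_exp M F (\<lambda>v. ennreal (f v)) w \<noteq> \<infinity>"
    "AE w in M. nn_cond_exp M F (\<lambda>v. ennreal (- f v)) w \<noteq> \<infinity>"
    by (rule nn_cond_exp_finite_AE; use integrableD[OF assms] in simp)+
  then show ?thesis
  proof eventually_elim
    case (elim w)
    have "enn2ereal x = ereal (enn2real x)" if "x \<noteq> \<top>" for x :: ennreal
      using that by (cases x rule: ennreal_cases) auto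
    then show ?case
      using elim by (simp add: gcond_exp_def real_cond_exp_def)
  qed
qed

lemma gcond_exp_indicator:
  assumes [measurable]: "B \<in> sets F" "S \<in> borel_measurable M"
  shows "AE w in M. w \<in> B \<longrightarrow> gcond_exp M F (\<lambda>v. indicator B v * S v) w = gcond_exp M F S w"
proof -
  have "AE w in M. indicator B w * nn_cond_exp M F (\<lambda>v. ennreal (\<sigma> * S v)) w
      = nn_cond_exp M F (\<lambda>v. ennreal (\<sigma> * (indicator B v * S v))) w" for \<sigma> :: real
  proof -
    have "(\<lambda>v. ennreal (\<sigma> * (indicator B v * S v))) = (\<lambda>v. indicator B v * ennreal (\<sigma> * S v))"
      by (auto simp: indicator_def)
    then show ?thesis
      by (simp add: nn_cond_exp_prod)
  qed
  from this[of 1] this[of "-1"] show ?thesis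
    by eventually_elim (auto simp: gcond_exp_def)
qed

lemma gcond_exp_mono:
  assumes "AE w in M. X w \<le> S w" and [measurable]: "X \<in> borel_measurable M" "S \<in> borel_measurable M"
  shows "AE w in M. gcond_exp M F X w \<le> gcond_exp M F S w"
proof -
  have "AE w in M. nn_cond_exp M F (\<lambda>v. ennreal (X v)) w \<le> nn_cond_exp M F (\<lambda>v. ennreal (S v)) w"
    "AE w in M. nn_cond_exp M F (\<lambda>v. ennreal (- S v)) w \<le> nn_cond_exp M F (\<lambda>v. ennreal (- X v)) w"
    using assms(1) by (intro nn_cond_exp_mono; auto elim!: eventually_mono intro: ennreal_leI)+
  then show ?thesis
    by eventually_elim (auto simp: gcond_exp_def intro!: ereal_minus_mono simp flip: less_eq_ennreal.rep_eq)
qed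

end

locale nonpos_drift =
  fixes M :: "'a measure" and G :: "nat \<Rightarrow> 'a measure" and T :: nat
    and a :: "nat \<Rightarrow> 'k::finite \<Rightarrow> 'a \<Rightarrow> real" and U :: "nat \<Rightarrow> 'k \<Rightarrow> 'a \<Rightarrow> real"
  assumes subalgebra: "\<And>t. t \<le> T \<Longrightarrow> sigma_finite_subalgebra M (G t)"
    and filtration: "\<And>s t. s \<le> t \<Longrightarrow> t \<le> T \<Longrightarrow> sets (G s) \<subseteq> sets (G t)"
    and weights_measurable: "\<And>s k. s \<le> T \<Longrightarrow> a s k \<in> borel_measurable (G s)"
    and weights_nonneg: "\<And>s k w. 0 \<le> a s k w"
    and increments_integrable: "\<And>s k. s \<le> T \<Longrightarrow> integrable M (U s k)"
    and drift_nonpos: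
      "\<And>s. s \<le> T \<Longrightarrow> AE w in M. (\<Sum>k\<in>UNIV. a s k w * real_cond_exp M (G s) (U s k) w) \<le> 0"
begin

definition partial_sum :: "nat \<Rightarrow> 'a \<Rightarrow> real" where
  "partial_sum t w = (\<Sum>s\<le>t. \<Sum>k\<in>UNIV. a s k w * U s k w)"

definition cond_partial_sum :: "nat \<Rightarrow> nat \<Rightarrow> 'a \<Rightarrow> real" where
  "cond_partial_sum t u w = (\<Sum>s\<le>t. \<Sum>k\<in>UNIV. a s k w * real_cond_exp M (G u) (U s k) w)"

(* The products a_(s,k) U_(s,k) need not be integrable, as the weights are unbounded; they are
   on these G_t-measurable sets, which exhaust the space. *)
definition weights_bounded :: "nat \<Rightarrow> nat \<Rightarrow> 'a set" where
  "weights_bounded t n = {w \<in> space M. (\<Sum>s\<le>t. \<Sum>k\<in>UNIV. a s k w) \<le> real n}"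

lemma subalgebra_G: "t \<le> T \<Longrightarrow> subalgebra M (G t)"
  by (rule sigma_finite_subalgebra.subalg[OF subalgebra])

lemma space_G: "t \<le> T \<Longrightarrow> space (G t) = space M"
  using subalgebra_G by (simp add: subalgebra_def)

lemma measurable_G: "t \<le> T \<Longrightarrow> f \<in> borel_measurable (G t) \<Longrightarrow> f \<in> borel_measurable M"
  using subalgebra_G by (rule measurable_from_subalg)

lemma weights_measurable_later:
  assumes "s \<le> t" "t \<le> T"
  shows "a s k \<in> borel_measurable (G t)"
  using measurable_mono[of borel borel "G s" "G t"] weights_measurable[of s k]
    filtration[OF assms] space_G[of s] space_G[of t] assms
  by auto

lemma weights_bounded_sets: "t \<le> T \<Longrightarrow> weights_bounded t n \<in> sets (G t)"
proof -
  assume "t \<le> T"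
  then have "(\<lambda>w. \<Sum>s\<le>t. \<Sum>k\<in>UNIV. a s k w) \<in> borel_measurable (G t)"
    using weights_measurable_later by (intro borel_measurable_sum) auto
  then have "{w \<in> space (G t). (\<Sum>s\<le>t. \<Sum>k\<in>UNIV. a s k w) \<le> real n} \<in> sets (G t)"
    by measurable
  then show ?thesis
    unfolding weights_bounded_def using space_G[OF \<open>t \<le> T\<close>] by simp
qed

lemma incseq_weights_bounded: "incseq (weights_bounded t)"
  by (auto simp: incseq_def weights_bounded_def intro: order_trans)

lemma weights_bounded_cover: "w \<in> space M \<Longrightarrow> \<exists>n. w \<in> weights_bounded t n"
  using real_arch_simple by (auto simp: weights_bounded_def)

lemma partial_sum_measurable [measurable]: "t \<le> T \<Longrightarrow> partial_sum t \<in> borel_measurable M"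
  unfolding partial_sum_def[abs_def]
  using measurable_G[OF _ weights_measurable] increments_integrable
  by (intro borel_measurable_sum borel_measurable_times) auto

lemma cond_partial_sum_measurable:
  "t \<le> u \<Longrightarrow> u \<le> T \<Longrightarrow> cond_partial_sum t u \<in> borel_measurable (G u)"
  unfolding cond_partial_sum_def[abs_def]
  using weights_measurable_later by (intro borel_measurable_sum borel_measurable_times) auto

lemma weight_le_bound:
  assumes "s \<le> t" "w \<in> weights_bounded t n"
  shows "a s k w \<le> real n"
proof -
  have "a s k w \<le> (\<Sum>k\<in>UNIV. a s k w)"
    by (rule member_le_sum) (auto simp: weights_nonneg)
  also have "\<dots> \<le> (\<Sum>s\<le>t. \<Sum>k\<in>UNIV. a s k w)"
    using assms(1)
    by (intro member_le_sum[where f="\<lambda>s. \<Sum>k\<in>UNIV. a s k w"] sum_nonneg weights_nonneg) auto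
  also have "\<dots> \<le> real n"
    using assms(2) by (simp add: weights_bounded_def)
  finally show ?thesis .
qed

lemma localized_tower_term:
  assumes "s \<le> t" "t \<le> u" "u \<le> T" "A \<in> sets (G u)" "A \<subseteq> weights_bounded t n"
  shows "integrable M (\<lambda>w. indicator A w * (a s k w * U s k w))
      \<and> integrable M (\<lambda>w. indicator A w * (a s k w * real_cond_exp M (G u) (U s k) w))
      \<and> (\<integral>w. indicator A w * (a s k w * real_cond_exp M (G u) (U s k) w) \<partial>M)
        = (\<integral>w. indicator A w * (a s k w * U s k w) \<partial>M)"
proof -
  interpret Gu: sigma_finite_subalgebra M "G u"
    using subalgebra assms by simp
  have sT: "s \<le> T"
    using assms by simp
  have f_meas: "(\<lambda>w. indicator A w * a s k w) \<in> borel_measurable (G u)"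
    using weights_measurable_later[of s u k] assms by simp
  have bound: "\<bar>indicator A w * a s k w\<bar> \<le> real n" for w
    using weight_le_bound[OF assms(1), of w n k] assms(5) weights_nonneg[of s k w]
    by (auto simp: indicator_def)
  have "integrable M (\<lambda>w. (indicator A w * a s k w) * U s k w)"
    by (rule integrable_bounded_mult[OF measurable_G[OF assms(3) f_meas] bound increments_integrable[OF sT]])
  then show ?thesis
    using Gu.real_cond_exp_intg[OF _ f_meas] increments_integrable[OF sT] by (auto simp: mult.assoc)
qed

lemma localized_tower:
  assumes "t \<le> u" "u \<le> T" "A \<in> sets (G u)" "A \<subseteq> weights_bounded t n"
  shows "integrable M (\<lambda>w. indicator A w * partial_sum t w)"
    and "integrable M (\<lambda>w. indicator A w * cond_partial_sum t u w)"
    and "(\<integral>w. indicator A w * cond_partial_sum t u w \<partial>M) = (\<integral>w. indicator A w * partial_sum t w \<partial>M)"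
proof -
  note terms = localized_tower_term[OF _ assms]
  show "integrable M (\<lambda>w. indicator A w * partial_sum t w)"
    "integrable M (\<lambda>w. indicator A w * cond_partial_sum t u w)"
    unfolding partial_sum_def cond_partial_sum_def sum_distrib_left
    by (intro Bochner_Integration.integrable_sum; simp add: terms)+
  have "(\<integral>w. indicator A w * cond_partial_sum t u w \<partial>M)
      = (\<Sum>s\<le>t. \<Sum>k\<in>UNIV. \<integral>w. indicator A w * (a s k w * real_cond_exp M (G u) (U s k) w) \<partial>M)"
    unfolding cond_partial_sum_def sum_distrib_left by (rule integral_sum_sum) (simp_all add: terms)
  also have "\<dots> = (\<Sum>s\<le>t. \<Sum>k\<in>UNIV. \<integral>w. indicator A w * (a s k w * U s k w) \<partial>M)"
    using terms by simp
  also have "\<dots> = (\<integral>w. indicator A w * partial_sum t w \<partial>M)"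
    unfolding partial_sum_def sum_distrib_left by (rule integral_sum_sum[symmetric]) (simp_all add: terms)
  finally show "(\<integral>w. indicator A w * cond_partial_sum t u w \<partial>M) = (\<integral>w. indicator A w * partial_sum t w \<partial>M)" .
qed

lemma cond_partial_sum_Suc_le:
  assumes "Suc t \<le> T"
  shows "AE w in M. cond_partial_sum (Suc t) (Suc t) w \<le> cond_partial_sum t (Suc t) w"
  using drift_nonpos[OF assms] by eventually_elim (simp add: cond_partial_sum_def)

lemma localized_cond_exp_cond_partial_sum:
  assumes "Suc t \<le> T"
  shows "localized_cond_exp M (G t) (weights_bounded t) (cond_partial_sum t (Suc t)) (cond_partial_sum t t)"
proof
  have tT: "t \<le> T"
    using assms by simp
  show "subalgebra M (G t)"
    using subalgebra_G[OF tT] .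
  show "cond_partial_sum t (Suc t) \<in> borel_measurable M"
    using cond_partial_sum_measurable[of t "Suc t"] assms by (intro measurable_G) auto
  show "cond_partial_sum t t \<in> borel_measurable (G t)"
    using cond_partial_sum_measurable tT by simp
  show "weights_bounded t n \<in> sets (G t)" for n
    using weights_bounded_sets tT by simp
  show "incseq (weights_bounded t)"
    by (rule incseq_weights_bounded)
  show "\<exists>n. w \<in> weights_bounded t n" if "w \<in> space M" for w
    using weights_bounded_cover that by simp
  fix n A assume A: "A \<in> sets (G t)" "A \<subseteq> weights_bounded t n"
  have "A \<in> sets (G (Suc t))"
    using A filtration[of t "Suc t"] assms by auto
  then show "integrable M (\<lambda>w. indicator A w * cond_partial_sum t (Suc t) w)
    \<and> integrable M (\<lambda>w. indicator A w * cond_partial_sum t t w)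
    \<and> (\<integral>w. indicator A w * cond_partial_sum t (Suc t) w \<partial>M)
      = (\<integral>w. indicator A w * cond_partial_sum t t w \<partial>M)"
    using localized_tower[of t "Suc t" A n] localized_tower[of t t A n] A assms by simp
qed

lemma gen_mean_nonpos_cond_partial_sum: "t \<le> T \<Longrightarrow> gen_mean_nonpos M (cond_partial_sum t t)"
proof (induction t)
  case 0
  have "AE w in M. cond_partial_sum 0 0 w \<le> 0"
    using drift_nonpos[of 0] by (simp add: cond_partial_sum_def)
  then show ?case
    by (rule gen_mean_nonpos_mono) (simp add: gen_mean_nonpos_def)
next
  case (Suc t)
  then have "gen_mean_nonpos M (cond_partial_sum t (Suc t))"
    using localized_cond_exp.gen_mean_nonpos_transfer[OF localized_cond_exp_cond_partial_sum] by simp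
  then show ?case
    by (rule gen_mean_nonpos_mono[OF cond_partial_sum_Suc_le[OF Suc.prems]])
qed

lemma gcond_exp_partial_sum_on_weights_bounded:
  "AE w in M. w \<in> weights_bounded T n \<longrightarrow>
     gcond_exp M (G T) (partial_sum T) w = ereal (cond_partial_sum T T w)"
proof -
  interpret GT: sigma_finite_subalgebra M "G T"
    using subalgebra by simp
  let ?B = "weights_bounded T n"
  let ?S = "\<lambda>w. indicator ?B w * partial_sum T w"
  have B: "?B \<in> sets (G T)"
    by (simp add: weights_bounded_sets)
  note tower = localized_tower[OF order_refl order_refl]
  have "AE w in M. real_cond_exp M (G T) ?S w = indicator ?B w * cond_partial_sum T T w"
  proof (rule GT.real_cond_exp_charact)
    fix A assume "A \<in> sets (G T)"
    then have "A \<inter> ?B \<in> sets (G T)"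
      using B by auto
    then show "(\<integral>w\<in>A. ?S w \<partial>M) = (\<integral>w\<in>A. indicator ?B w * cond_partial_sum T T w \<partial>M)"
      using tower(3)[of "A \<inter> ?B" n]
      by (simp add: set_lebesgue_integral_def indicator_inter_arith mult.assoc)
  qed (use tower[OF B order_refl] cond_partial_sum_measurable[of T T] B in auto)
  moreover have "AE w in M. w \<in> ?B \<longrightarrow> gcond_exp M (G T) ?S w = gcond_exp M (G T) (partial_sum T) w"
    using B by (intro GT.gcond_exp_indicator) auto
  moreover have "AE w in M. gcond_exp M (G T) ?S w = ereal (real_cond_exp M (G T) ?S w)"
    using tower[OF B order_refl] by (intro GT.gcond_exp_eq_real_cond_exp) auto
  ultimately show ?thesis
    by eventually_elim auto
qed

lemma gcond_exp_partial_sum: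
  "AE w in M. gcond_exp M (G T) (partial_sum T) w = ereal (cond_partial_sum T T w)"
proof -
  have "AE w in M. \<forall>n. w \<in> weights_bounded T n \<longrightarrow>
      gcond_exp M (G T) (partial_sum T) w = ereal (cond_partial_sum T T w)"
    by (rule AE_all_countable[THEN iffD2, OF allI, OF gcond_exp_partial_sum_on_weights_bounded])
  then show ?thesis
    using weights_bounded_cover by (auto elim!: eventually_mono)
qed

theorem gcond_exp_gen_mean_nonpos:
  assumes "X \<in> borel_measurable M" and "AE w in M. X w \<le> partial_sum T w"
  shows "(\<integral>\<^sup>+w. e2ennreal (gcond_exp M (G T) X w) \<partial>M)
    \<le> (\<integral>\<^sup>+w. e2ennreal (- gcond_exp M (G T) X w) \<partial>M)"
proof -
  interpret GT: sigma_finite_subalgebra M "G T"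
    using subalgebra by simp
  have le: "AE w in M. gcond_exp M (G T) X w \<le> ereal (cond_partial_sum T T w)"
    using GT.gcond_exp_mono[OF assms(2,1) partial_sum_measurable[OF order_refl]] gcond_exp_partial_sum
    by eventually_elim simp
  have "(\<integral>\<^sup>+w. e2ennreal (gcond_exp M (G T) X w) \<partial>M)
      \<le> (\<integral>\<^sup>+w. ennreal (cond_partial_sum T T w) \<partial>M)"
    using le by (intro nn_integral_mono_AE) (auto elim!: eventually_mono dest!: e2ennreal_mono)
  also have "\<dots> \<le> (\<integral>\<^sup>+w. ennreal (- cond_partial_sum T T w) \<partial>M)"
    using gen_mean_nonpos_cond_partial_sum[of T] by (simp add: gen_mean_nonpos_def)
  also have "\<dots> \<le> (\<integral>\<^sup>+w. e2ennreal (- gcond_exp M (G T) X w) \<partial>M)"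
  proof (intro nn_integral_mono_AE)
    show "AE w in M. ennreal (- cond_partial_sum T T w) \<le> e2ennreal (- gcond_exp M (G T) X w)"
      using le
    proof eventually_elim
      case (elim w)
      then have "ereal (- cond_partial_sum T T w) \<le> - gcond_exp M (G T) X w"
        by (metis ereal_minus_le_minus uminus_ereal.simps(1))
      then show ?case
        using e2ennreal_mono by fastforce
    qed
  qed
  finally show ?thesis .
qed

end

lemma sum_UNIV_triple:
  fixes f :: "'a::finite \<times> 'b::finite \<times> bool \<Rightarrow> 'c::comm_monoid_add"
  shows "(\<Sum>k\<in>UNIV. f k) = (\<Sum>i\<in>UNIV. \<Sum>j\<in>UNIV. f (i, j, True) + f (i, j, False))"
  by (simp only: UNIV_Times_UNIV[symmetric] sum.cartesian_product') (simp add: UNIV_bool add.commute)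

(* k = (i, j, b) indexes the term (eta^ij)^+ F(e_ij) if b, and (eta^ij)^- F(-e_ij) otherwise,
   of the representation in condition H-A. *)
definition signed_unit :: "'d \<times> 'd \<times> bool \<Rightarrow> 'd::finite mat" where
  "signed_unit k = (case k of (i, j, b) \<Rightarrow> if b then eij i j else - eij i j)"

definition entry_part :: "'d::finite mat \<Rightarrow> 'd \<times> 'd \<times> bool \<Rightarrow> real" where
  "entry_part x k = (case k of (i, j, b) \<Rightarrow> if b then ppart (x $ i $ j) else npart (x $ i $ j))"

lemma entry_part_nonneg: "0 \<le> entry_part x k"
  by (auto simp: entry_part_def ppart_def npart_def split: prod.split)

lemma borel_measurable_vec_nth [measurable (raw)]:
  fixes f :: "'a \<Rightarrow> 'b::real_normed_vector ^ 'n"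
  assumes "f \<in> borel_measurable M"
  shows "(\<lambda>w. f w $ i) \<in> borel_measurable M"
  using linear_continuous_on[OF bounded_linear_vec_nth] assms by (rule borel_measurable_continuous_on)

lemma entry_part_measurable:
  assumes [measurable]: "\<eta> \<in> borel_measurable N"
  shows "(\<lambda>w. entry_part (\<eta> w) k) \<in> borel_measurable N"
  unfolding entry_part_def ppart_def npart_def by (cases k) (simp split: if_split; measurable)

lemma Fbar_eq_sum_entry_part:
  "Fbar M H F t \<eta> Z w
    = (\<Sum>k\<in>UNIV. entry_part (\<eta> w) k * real_cond_exp M (H t) (\<lambda>v. Z v \<bullet> F t v (signed_unit k)) w)"
  unfolding Fbar_def sum_UNIV_triple by (simp add: entry_part_def signed_unit_def)

lemma condHA_sum_entry_part:
  assumes "condHA M T A F" "t \<le> T" "\<eta> \<in> borel_measurable M"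
  shows "AE w in M. F t w (\<eta> w) = (\<Sum>k\<in>UNIV. entry_part (\<eta> w) k *\<^sub>R F t w (signed_unit k))"
  using assms unfolding condHA_def sum_UNIV_triple by (simp add: entry_part_def signed_unit_def)


lemma integrable_inner_signed_unit:
  assumes "condI M T F" "t \<le> T"
    and [measurable]: "Z \<in> borel_measurable M" and bounded: "AE w in M. norm (Z w) \<le> C"
  shows "integrable M (\<lambda>w. Z w \<bullet> F t w (signed_unit k))"
proof (rule Bochner_Integration.integrable_bound)
  have F_int: "integrable M (\<lambda>w. F t w (signed_unit k))"
    using assms(1,2) by (cases k) (simp add: condI_def signed_unit_def)
  then show "integrable M (\<lambda>w. C * norm (F t w (signed_unit k)))"
    by simp
  show "(\<lambda>w. Z w \<bullet> F t w (signed_unit k)) \<in> borel_measurable M"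
    using F_int by measurable
  show "AE w in M. norm (Z w \<bullet> F t w (signed_unit k)) \<le> norm (C * norm (F t w (signed_unit k)))"
    using bounded
  proof eventually_elim
    case (elim w)
    have "\<bar>Z w \<bullet> F t w (signed_unit k)\<bar> \<le> norm (Z w) * norm (F t w (signed_unit k))"
      by (rule Cauchy_Schwarz_ineq2)
    also have "\<dots> \<le> C * norm (F t w (signed_unit k))"
      using elim by (intro mult_right_mono) auto
    finally show ?case
      by simp
  qed
qed

lemma DF_nonpos_drift:
  assumes "prob_space M" and subalg: "\<And>t. t \<le> T \<Longrightarrow> subalgebra M (H t)"
    and "\<And>s t. s \<le> t \<Longrightarrow> t \<le> T \<Longrightarrow> sets (H s) \<subseteq> sets (H t)"
    and "condI M T F" and Z: "Z \<in> DF M H T A F" and \<eta>: "\<And>t. t \<le> T \<Longrightarrow> \<eta> t \<in> L0A (H t) A"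
  shows "nonpos_drift M H T (\<lambda>t k w. entry_part (\<eta> t w) k) (\<lambda>t k w. Z w \<bullet> F t w (signed_unit k))"
proof (rule nonpos_drift.intro)
  show "sigma_finite_subalgebra M (H t)" if "t \<le> T" for t
    using assms(1) subalg[OF that] by (intro finite_measure_subalgebra_is_sigma_finite)
      (simp add: finite_measure_subalgebra_def finite_measure_subalgebra_axioms_def prob_space_def)
  show "(\<lambda>w. entry_part (\<eta> t w) k) \<in> borel_measurable (H t)" if "t \<le> T" for t k
    using \<eta>[OF that] by (intro entry_part_measurable) (simp add: L0A_def)
  show "integrable M (\<lambda>w. Z w \<bullet> F t w (signed_unit k))" if "t \<le> T" for t k
    using Z assms(4) that by (auto simp: DF_def intro: integrable_inner_signed_unit)
  show "AE w in M. (\<Sum>k\<in>UNIV. entry_part (\<eta> t w) k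
      * real_cond_exp M (H t) (\<lambda>w. Z w \<bullet> F t w (signed_unit k)) w) \<le> 0" if "t \<le> T" for t
    using Z \<eta> that by (simp add: DF_def Fbar_eq_sum_entry_part)
qed (use assms(3) entry_part_nonneg in auto)

lemma At_inner_le_sum_entry_part:
  assumes subalg: "\<And>t. t \<le> T \<Longrightarrow> subalgebra M (H t)" and "condHA M T A F"
    and "g \<in> At M H A F T T" and Z_pos: "AE w in M. \<forall>i. Z w $ i > 0"
  obtains \<eta> where "\<And>t. t \<le> T \<Longrightarrow> \<eta> t \<in> L0A (H t) A"
    and "AE w in M. Z w \<bullet> g w
      \<le> (\<Sum>t\<le>T. \<Sum>k\<in>UNIV. entry_part (\<eta> t w) k * (Z w \<bullet> F t w (signed_unit k)))"
proof -
  obtain \<xi> r where \<xi>: "\<And>t. t \<le> T \<Longrightarrow> \<xi> t \<in> Nt M H A F t"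
    and r_nonneg: "\<forall>w\<in>space M. \<forall>i. 0 \<le> r w $ i"
    and g: "AE w in M. g w = (\<Sum>t\<le>T. \<xi> t w) - r w"
    using assms(3) unfolding At_def by blast
  have "\<forall>t. \<exists>\<eta>. t \<le> T \<longrightarrow> \<eta> \<in> L0A (H t) A \<and> (AE w in M. \<xi> t w = F t w (\<eta> w))"
    using \<xi> unfolding Nt_def by blast
  then obtain \<eta> where \<eta>: "\<And>t. t \<le> T \<Longrightarrow> \<eta> t \<in> L0A (H t) A"
    and \<xi>_eq: "\<And>t. t \<le> T \<Longrightarrow> AE w in M. \<xi> t w = F t w (\<eta> t w)"
    by metis
  have "AE w in M. \<xi> t w = (\<Sum>k\<in>UNIV. entry_part (\<eta> t w) k *\<^sub>R F t w (signed_unit k))"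
    if "t \<le> T" for t
  proof -
    have "\<eta> t \<in> borel_measurable M"
      using \<eta>[OF that] by (intro measurable_from_subalg[OF subalg[OF that]]) (simp add: L0A_def)
    then have "AE w in M. F t w (\<eta> t w) = (\<Sum>k\<in>UNIV. entry_part (\<eta> t w) k *\<^sub>R F t w (signed_unit k))"
      by (rule condHA_sum_entry_part[OF assms(2) that])
    with \<xi>_eq[OF that] show ?thesis
      by eventually_elim simp
  qed
  then have "AE w in M. \<forall>t\<le>T. \<xi> t w = (\<Sum>k\<in>UNIV. entry_part (\<eta> t w) k *\<^sub>R F t w (signed_unit k))"
    by (subst AE_all_countable) auto
  with g Z_pos AE_space have "AE w in M. Z w \<bullet> g w
      \<le> (\<Sum>t\<le>T. \<Sum>k\<in>UNIV. entry_part (\<eta> t w) k * (Z w \<bullet> F t w (signed_unit k)))"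
  proof eventually_elim
    case (elim w)
    have "0 \<le> Z w \<bullet> r w"
      using elim(2,3) r_nonneg unfolding inner_vec_def by (auto intro!: sum_nonneg simp: less_imp_le)
    then have "Z w \<bullet> g w \<le> (\<Sum>t\<le>T. Z w \<bullet> \<xi> t w)"
      by (simp add: elim(1) inner_diff_right inner_sum_right)
    also have "\<dots> = (\<Sum>t\<le>T. \<Sum>k\<in>UNIV. entry_part (\<eta> t w) k * (Z w \<bullet> F t w (signed_unit k)))"
      using elim(4) by (intro sum.cong) (simp_all add: inner_sum_right)
    finally show ?case .
  qed
  with \<eta> show ?thesis
    using that by blast
qed

theorem mainTheorem4:
  fixes M :: "'w measure" and H :: "nat \<Rightarrow> 'w measure" and T :: nat
    and A :: "'d::finite mat set"
    and F :: "nat \<Rightarrow> 'w \<Rightarrow> 'd mat \<Rightarrow> real ^ 'd"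
    and g Z :: "'w \<Rightarrow> real ^ 'd"
  assumes "prob_space M" and "complete_measure M"
    and "\<And>t. t \<le> T \<Longrightarrow> subalgebra M (H t)"
    and "\<And>s t. s \<le> t \<Longrightarrow> t \<le> T \<Longrightarrow> sets (H s) \<subseteq> sets (H t)"
    and "closed A" and "convex A" and "cone A"
    and "in_bfF M T A F" and "condHA M T A F" and "condI M T F"
    and "DF M H T A F \<noteq> {}"
    and "g \<in> At M H A F T T" and "Z \<in> DF M H T A F"
    and "(\<integral>\<^sup>+ w. e2ennreal (- gcond_exp M (H T) (\<lambda>v. Z v \<bullet> g v) w) \<partial>M) < \<infinity>"
  shows "(\<integral>\<^sup>+ w. e2ennreal (gcond_exp M (H T) (\<lambda>v. Z v \<bullet> g v) w) \<partial>M)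
         \<le> (\<integral>\<^sup>+ w. e2ennreal (- gcond_exp M (H T) (\<lambda>v. Z v \<bullet> g v) w) \<partial>M)"
proof -
  (* Only (D1) enters, and the conclusion holds in [0, infinity] without the finiteness
     hypothesis on the negative part. *)
  have Z_pos: "AE w in M. \<forall>i. Z w $ i > 0"
    using assms(13) by (simp add: DF_def)
  obtain \<eta> where \<eta>: "\<And>t. t \<le> T \<Longrightarrow> \<eta> t \<in> L0A (H t) A"
    and le: "AE w in M. Z w \<bullet> g w
      \<le> (\<Sum>t\<le>T. \<Sum>k\<in>UNIV. entry_part (\<eta> t w) k * (Z w \<bullet> F t w (signed_unit k)))"
    using At_inner_le_sum_entry_part[OF assms(3,9,12) Z_pos] by blast
  interpret nonpos_drift M H T "\<lambda>t k w. entry_part (\<eta> t w) k" "\<lambda>t k w. Z w \<bullet> F t w (signed_unit k)"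
    using DF_nonpos_drift[OF assms(1,3,4,10,13) \<eta>] .
  have [measurable]: "g \<in> borel_measurable M" "Z \<in> borel_measurable M"
    using assms(12,13) by (simp_all add: At_def DF_def)
  then have "(\<lambda>w. Z w \<bullet> g w) \<in> borel_measurable M"
    by measurable
  moreover have "AE w in M. Z w \<bullet> g w \<le> partial_sum T w"
    using le by (simp add: partial_sum_def)
  ultimately show ?thesis
    by (rule gcond_exp_gen_mean_nonpos)
qed

end
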